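(* Let $n\ge1$, $k\ge1$, and $\gamma=((i_1\,j_1),\dots,(i_k\,j_k))\in\Sigma^*_n(k)$. Then: 1. The sequence $(j_1,\dots,j_k)$ has pairwise distinct terms. 2. For all $l\in\{1,\dots,k\}$, $j_l$ is a fixed point of $\gamma_{l-1}$. 3. For all $l\in\{1,\dots,k\}$, $\gamma_l$ is obtained from $\gamma_{l-1}$ by inserting $j_l$ into the cycle of $i_l$ immediately after $i_l$; that is, $\gamma_l(i_l)=j_l$, $\gamma_l(j_l)=\gamma_{l-1}(i_l)$, and $\gamma_l(x)=\gamma_{l-1}(x)$ for $x\notin\{i_l,j_l\}$. 4. For all $m\in\{1,\dots,k\}$, the support of $\gamma_m$ equals $\bigcup_{l=1}^m\{i_l,j_l\}$.
   Context: Let $n\ge1$. $\mathfrak S_n$ is the symmetric group on $\{1,\dots,n\}$; products of permutations are composed from right to left, i.e. $(\sigma\pi)(x)=\sigma(\pi(x))$. $\mathsf T_n$ denotes the set of transpositions; a transposition is always written $(i\,j)$ with $i<j$. For $\sigma\in\mathfrak S_n$, $\ell(\sigma)$ is the number of cycles of $\sigma$ (fixed points counted) and $|\sigma|=n-\ell(\sigma)$. Write $\sigma_1\preccurlyeq\sigma_2$ iff $|\sigma_2|=|\sigma_1|+|\sigma_1^{-1}\sigma_2|$. For $k\ge0$, $\Sigma_n(k)=\{(\tau_1,\dots,\tau_k)\in(\mathsf T_n)^k : |\tau_1\cdots\tau_k|=k,\ \tau_1\cdots\tau_k\preccurlyeq(1\,2\,\dots\,n)\}$, and $\Sigma^*_n(k)$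 is the subset of those $((i_1\,j_1),\dots,(i_k\,j_k))\in\Sigma_n(k)$ with $i_1\le i_2\le\dots\le i_k$. For $\gamma=(\tau_1,\dots,\tau_k)$, $\gamma_l=\tau_1\cdots\tau_l$ for $0\le l\le k$ ($\gamma_0=\mathrm{id}$). The support of a permutation is its set of non-fixed points. *)

theory Defs
  imports "HOL-Combinatorics.Transposition"
begin

(* Permutations of {1..n} are functions nat => nat that permute {1..n}
   (identity outside). Products compose right to left: sigma*pi = sigma o pi. *)

definition cyc :: "nat \<Rightarrow> (nat \<Rightarrow> nat) \<Rightarrow> nat \<Rightarrow> nat set" where
  "cyc n \<sigma> x = {y \<in> {1..n}. \<exists>m. (\<sigma> ^^ m) x = y}"

definition ncycles :: "nat \<Rightarrow> (nat \<Rightarrow> nat) \<Rightarrow> nat" where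
  "ncycles n \<sigma> = card (cyc n \<sigma> ` {1..n})"

definition plen :: "nat \<Rightarrow> (nat \<Rightarrow> nat) \<Rightarrow> nat" where
  "plen n \<sigma> = n - ncycles n \<sigma>"

definition ple :: "nat \<Rightarrow> (nat \<Rightarrow> nat) \<Rightarrow> (nat \<Rightarrow> nat) \<Rightarrow> bool" where
  "ple n \<sigma>1 \<sigma>2 \<longleftrightarrow> plen n \<sigma>2 = plen n \<sigma>1 + plen n (inv \<sigma>1 \<circ> \<sigma>2)"

definition longcyc :: "nat \<Rightarrow> nat \<Rightarrow> nat" where
  "longcyc n x = (if 1 \<le> x \<and> x < n then x + 1 else if x = n \<and> 1 \<le> n then 1 else x)"

definition is_transp :: "nat \<Rightarrow> nat \<times> nat \<Rightarrow> bool" where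
  "is_transp n t \<longleftrightarrow> 1 \<le> fst t \<and> fst t < snd t \<and> snd t \<le> n"

definition tprod :: "(nat \<times> nat) list \<Rightarrow> nat \<Rightarrow> nat" where
  "tprod ts = foldr (\<lambda>t acc. transpose (fst t) (snd t) \<circ> acc) ts id"

definition gam :: "(nat \<times> nat) list \<Rightarrow> nat \<Rightarrow> nat \<Rightarrow> nat" where
  "gam ts l = tprod (take l ts)"

definition Sigma_n :: "nat \<Rightarrow> nat \<Rightarrow> (nat \<times> nat) list set" where
  "Sigma_n n k = {ts. length ts = k \<and> (\<forall>t \<in> set ts. is_transp n t)
      \<and> plen n (tprod ts) = k \<and> ple n (tprod ts) (longcyc n)}"

definition Sigma_star :: "nat \<Rightarrow> nat \<Rightarrow> (nat \<times> nat) list set" where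
  "Sigma_star n k = {ts \<in> Sigma_n n k. sorted (map fst ts)}"

end

theory Submission
  imports Defs "HOL-Combinatorics.Combinatorics"
begin

(* Right multiplication by a transposition (a b) merges the cycles of a and b when they
   differ and splits their common cycle otherwise; so |.| is subadditive and, along the
   geodesic from id to c = (1 ... n), every step must merge two cycles of gamma_(l-1) and
   split a cycle of the Kreweras complement gamma_(l-1)^-1 c.

   The combinatorial core uses two invariants of the prefix products gamma_l: they are
   non-crossing (the arc between u and gamma_l(u) is gamma_l-invariant), and every
   non-trivial cycle contains a point <= i_l.  Together with the sortedness i_l <= i_(l+1)
   they force j_(l+1) to be a fixed point of gamma_l (insertion_point_fixed), and both
   invariants are preserved by the insertion. *)

definition reach :: "('a \<Rightarrow> 'a) \<Rightarrow> 'a \<Rightarrow> 'a \<Rightarrow> bool" where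
  "reach f x y \<longleftrightarrow> (\<exists>m. (f ^^ m) x = y)"

lemma reach_refl [simp]: "reach f x x"
  unfolding reach_def by (metis funpow_0)

lemma reach_step: "reach f x y \<Longrightarrow> reach f x (f y)"
  unfolding reach_def by (metis comp_apply funpow.simps(2))

lemma reach_trans: "reach f x y \<Longrightarrow> reach f y z \<Longrightarrow> reach f x z"
  unfolding reach_def by (metis funpow_add comp_apply)

lemma reach_in:
  assumes "\<sigma> permutes S" "x \<in> S" "reach \<sigma> x y"
  shows "y \<in> S"
proof -
  have "(\<sigma> ^^ m) x \<in> S" for m
  proof (induction m)
    case (Suc m)
    then show ?case using permutes_in_image[OF assms(1)] by simp
  qed (use assms(2) in simp)
  then show ?thesis using assms(3) unfolding reach_def by blast
qed

lemma funpow_fixpoint: "f x = x \<Longrightarrow> (f ^^ m) x = x"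
  by (induction m) auto

(* For a permutation of a finite set every point returns to itself, so reach is symmetric. *)
lemma reach_sym:
  assumes "\<sigma> permutes S" "finite S" "reach \<sigma> x y"
  shows "reach \<sigma> y x"
proof -
  obtain m where m: "(\<sigma> ^^ m) x = y" using assms(3) unfolding reach_def by blast
  have "permutation \<sigma>" using permutes_imp_permutation[OF assms(2,1)] .
  then obtain p where p: "p > 0" "(\<sigma> ^^ p) x = x" by (rule permutation_self)
  have period: "(\<sigma> ^^ (p * r)) x = x" for r
    using p(2) by (induction r) (auto simp: funpow_add)
  have "(\<sigma> ^^ ((p - 1) * m)) y = (\<sigma> ^^ ((p - 1) * m + m)) x"
    by (simp add: funpow_add m[symmetric])
  also have "(p - 1) * m + m = p * m" using p(1) by (cases p) auto
  also have "(\<sigma> ^^ (p * m)) x = x" by (rule period)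
  finally show ?thesis unfolding reach_def by blast
qed

lemma cyc_reach: "cyc n \<sigma> x = {y \<in> {1..n}. reach \<sigma> x y}"
  by (simp add: cyc_def reach_def)

lemma cyc_self: "x \<in> {1..n} \<Longrightarrow> x \<in> cyc n \<sigma> x"
  by (simp add: cyc_reach)

lemma cyc_eq_iff:
  assumes P: "\<sigma> permutes {1..n}" and x: "x \<in> {1..n}"
  shows "cyc n \<sigma> x = cyc n \<sigma> y \<longleftrightarrow> reach \<sigma> y x"
proof
  assume "cyc n \<sigma> x = cyc n \<sigma> y"
  then show "reach \<sigma> y x" using cyc_self[OF x, of \<sigma>] by (simp add: cyc_reach)
next
  assume yx: "reach \<sigma> y x"
  then have "reach \<sigma> x y" using reach_sym[OF P] by blast
  then show "cyc n \<sigma> x = cyc n \<sigma> y" using yx by (auto simp: cyc_reach intro: reach_trans)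
qed

lemma cyc_of_member:
  assumes P: "\<sigma> permutes {1..n}" and y: "y \<in> cyc n \<sigma> z"
  shows "cyc n \<sigma> y = cyc n \<sigma> z"
  using y cyc_eq_iff[OF P, of y z] by (simp add: cyc_reach)

lemma cyc_cong:
  assumes "\<And>y. reach \<sigma> x y \<Longrightarrow> \<sigma>' y = \<sigma> y"
  shows "cyc n \<sigma>' x = cyc n \<sigma> x"
proof -
  have "(\<sigma>' ^^ m) x = (\<sigma> ^^ m) x" for m
  proof (induction m)
    case (Suc m)
    have "reach \<sigma> x ((\<sigma> ^^ m) x)" unfolding reach_def by blast
    then show ?case using Suc assms by simp
  qed simp
  then show ?thesis unfolding cyc_def by simp
qed

definition cycle_set :: "nat \<Rightarrow> (nat \<Rightarrow> nat) \<Rightarrow> nat set set" where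
  "cycle_set n \<sigma> = cyc n \<sigma> ` {1..n}"

lemma ncycles_card: "ncycles n \<sigma> = card (cycle_set n \<sigma>)"
  by (simp add: ncycles_def cycle_set_def)

lemma finite_cycle_set [simp]: "finite (cycle_set n \<sigma>)"
  by (simp add: cycle_set_def)

lemma ncycles_le: "ncycles n \<sigma> \<le> n"
  unfolding ncycles_def using card_image_le[of "{1..n}" "cyc n \<sigma>"] by simp

lemma transpose_perm:
  "\<sigma> permutes {1..n} \<Longrightarrow> a \<in> {1..n} \<Longrightarrow> b \<in> {1..n} \<Longrightarrow> \<sigma> \<circ> transpose a b permutes {1..n}"
  by (simp add: permutes_compose permutes_swap_id)

lemma cycle_unchanged:
  assumes P: "\<sigma> permutes {1..n}" and x: "x \<in> {1..n}" and a: "a \<in> {1..n}" and b: "b \<in> {1..n}"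
    and ne: "cyc n \<sigma> x \<noteq> cyc n \<sigma> a" "cyc n \<sigma> x \<noteq> cyc n \<sigma> b"
  shows "cyc n (\<sigma> \<circ> transpose a b) x = cyc n \<sigma> x"
proof (rule cyc_cong)
  fix y assume "reach \<sigma> x y"
  then have "y \<noteq> a" "y \<noteq> b" using ne cyc_eq_iff[OF P a, of x] cyc_eq_iff[OF P b, of x] by auto
  then show "(\<sigma> \<circ> transpose a b) y = \<sigma> y" by simp
qed

lemma persistent_cycles:
  assumes P: "\<sigma> permutes {1..n}" and a: "a \<in> {1..n}" and b: "b \<in> {1..n}"
  shows "cycle_set n \<sigma> - {cyc n \<sigma> a, cyc n \<sigma> b} \<subseteq> cycle_set n (\<sigma> \<circ> transpose a b)"
proof
  fix D assume "D \<in> cycle_set n \<sigma> - {cyc n \<sigma> a, cyc n \<sigma> b}"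
  then obtain x where x: "x \<in> {1..n}" "D = cyc n \<sigma> x" "D \<noteq> cyc n \<sigma> a" "D \<noteq> cyc n \<sigma> b"
    unfolding cycle_set_def by blast
  then have "cyc n (\<sigma> \<circ> transpose a b) x = D" using cycle_unchanged[OF P x(1) a b] by simp
  then show "D \<in> cycle_set n (\<sigma> \<circ> transpose a b)" using x(1) unfolding cycle_set_def by blast
qed

lemma new_cycle_not_old:
  assumes P: "\<sigma> permutes {1..n}" and y: "y \<in> {1..n}"
  shows "cyc n \<sigma>' y \<notin> cycle_set n \<sigma> - {cyc n \<sigma> y}"
proof
  assume "cyc n \<sigma>' y \<in> cycle_set n \<sigma> - {cyc n \<sigma> y}"
  then obtain z where z: "cyc n \<sigma>' y = cyc n \<sigma> z" "cyc n \<sigma> z \<noteq> cyc n \<sigma> y"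
    unfolding cycle_set_def by blast
  have "y \<in> cyc n \<sigma> z" using z(1) cyc_self[OF y, of \<sigma>'] by simp
  then show False using cyc_of_member[OF P] z(2) by blast
qed

(* If a and b lie on one cycle, then sigma o (a b) separates them: starting at a,
   sigma o (a b) only visits the arc of the old cycle running from sigma b to a. *)
lemma split_separates:
  assumes ab: "a \<noteq> b" and r: "reach \<sigma> b a"
  shows "\<not> reach (\<sigma> \<circ> transpose a b) a b"
proof -
  define \<sigma>' where "\<sigma>' = \<sigma> \<circ> transpose a b"
  obtain m where m: "(\<sigma> ^^ m) b = a" using r unfolding reach_def by blast
  then have m0: "m > 0" using ab by (cases m) auto
  define d where "d = (LEAST m. m > 0 \<and> (\<sigma> ^^ m) b = a)"
  have d: "d > 0" "(\<sigma> ^^ d) b = a"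
    using LeastI[of "\<lambda>m. m > 0 \<and> (\<sigma> ^^ m) b = a", OF conjI[OF m0 m]] d_def by auto
  have before_a: "(\<sigma> ^^ s) b \<noteq> a" if "0 < s" "s < d" for s
    using not_less_Least[of s "\<lambda>m. m > 0 \<and> (\<sigma> ^^ m) b = a"] that d_def by auto
  have before_b: "(\<sigma> ^^ s) b \<noteq> b" if "0 < s" "s < d" for s
  proof
    assume "(\<sigma> ^^ s) b = b"
    then have "(\<sigma> ^^ (d - s)) b = (\<sigma> ^^ (d - s + s)) b" by (simp add: funpow_add)
    then show False using before_a[of "d - s"] that d(2) by simp
  qed
  (* The arc T from \<sigma> b to a is closed under \<sigma>', contains a but not b. *)
  define T where "T = {(\<sigma> ^^ s) b | s. 1 \<le> s \<and> s \<le> d}"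
  have aT: "a \<in> T" unfolding T_def using d by (intro CollectI exI[of _ d]) auto
  have bT: "b \<notin> T"
  proof
    assume "b \<in> T"
    then obtain s where s: "1 \<le> s" "s \<le> d" "(\<sigma> ^^ s) b = b" unfolding T_def by auto
    then show False using before_b[of s] d(2) ab by (cases "s = d") auto
  qed
  have closed: "\<sigma>' y \<in> T" if "y \<in> T" for y
  proof -
    obtain s where s: "1 \<le> s" "s \<le> d" "y = (\<sigma> ^^ s) b"
      using \<open>y \<in> T\<close> unfolding T_def by blast
    show ?thesis
    proof (cases "s = d")
      case True
      then have "\<sigma>' y = (\<sigma> ^^ 1) b" using s d by (simp add: \<sigma>'_def)
      then show ?thesis unfolding T_def using d by (intro CollectI exI[of _ 1]) auto
    next
      case False
      then have "y \<noteq> a" "y \<noteq> b" using s before_a[of s] before_b[of s] by auto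
      then have "\<sigma>' y = (\<sigma> ^^ Suc s) b" using s by (simp add: \<sigma>'_def)
      then show ?thesis unfolding T_def using s False by (intro CollectI exI[of _ "Suc s"]) auto
    qed
  qed
  have "(\<sigma>' ^^ m) a \<in> T" for m
    by (induction m) (use aT closed in auto)
  then show ?thesis using bT unfolding reach_def \<sigma>'_def by metis
qed

lemma ncycles_split_ge:
  assumes P: "\<sigma> permutes {1..n}" and a: "a \<in> {1..n}" and b: "b \<in> {1..n}"
    and ab: "a \<noteq> b" and r: "reach \<sigma> b a"
  shows "ncycles n \<sigma> + 1 \<le> ncycles n (\<sigma> \<circ> transpose a b)"
proof -
  define \<sigma>' where "\<sigma>' = \<sigma> \<circ> transpose a b"
  have P': "\<sigma>' permutes {1..n}" unfolding \<sigma>'_def using transpose_perm[OF P a b] .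
  define C where "C = cyc n \<sigma> a"
  have Cb: "cyc n \<sigma> b = C" using cyc_eq_iff[OF P a, of b] r C_def by simp
  have C: "C \<in> cycle_set n \<sigma>" using a C_def cycle_set_def by auto
  define New where "New = (cycle_set n \<sigma> - {C}) \<union> {cyc n \<sigma>' a, cyc n \<sigma>' b}"
  have "cyc n \<sigma>' a \<in> cycle_set n \<sigma>'" "cyc n \<sigma>' b \<in> cycle_set n \<sigma>'"
    using a b unfolding cycle_set_def by auto
  then have "New \<subseteq> cycle_set n \<sigma>'"
    using persistent_cycles[OF P a b] Cb unfolding New_def C_def \<sigma>'_def by auto
  then have "card New \<le> ncycles n \<sigma>'" unfolding ncycles_card by (intro card_mono) auto
  moreover have "cyc n \<sigma>' a \<noteq> cyc n \<sigma>' b"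
    using cyc_eq_iff[OF P' a, of b] split_separates[OF ab r] reach_sym[OF P'] \<sigma>'_def by auto
  then have "card New = card (cycle_set n \<sigma> - {C}) + 2"
    using new_cycle_not_old[OF P a, of \<sigma>'] new_cycle_not_old[OF P b, of \<sigma>'] Cb
    unfolding New_def C_def by (subst card_Un_disjoint) auto
  moreover have "card (cycle_set n \<sigma> - {C}) + 1 = ncycles n \<sigma>"
    using card.remove[OF finite_cycle_set C] ncycles_card by simp
  ultimately show ?thesis unfolding \<sigma>'_def by linarith
qed

(* If a and b lie on different cycles, then sigma o (a b) joins them: starting at a,
   it runs through the whole old cycle of b. *)
lemma merge_connects:
  assumes P: "\<sigma> permutes S" and S: "finite S" and ab: "a \<noteq> b" and r: "\<not> reach \<sigma> b a"
  shows "reach (\<sigma> \<circ> transpose a b) a b"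
proof -
  define \<sigma>' where "\<sigma>' = \<sigma> \<circ> transpose a b"
  have "permutation \<sigma>" using permutes_imp_permutation[OF S P] .
  then obtain p0 where p0: "p0 > 0" "(\<sigma> ^^ p0) b = b" by (rule permutation_self)
  define p where "p = (LEAST m. m > 0 \<and> (\<sigma> ^^ m) b = b)"
  have p: "p > 0" "(\<sigma> ^^ p) b = b"
    using LeastI[of "\<lambda>m. m > 0 \<and> (\<sigma> ^^ m) b = b", OF conjI[OF p0]] p_def by auto
  have before_b: "(\<sigma> ^^ s) b \<noteq> b" if "0 < s" "s < p" for s
    using not_less_Least[of s "\<lambda>m. m > 0 \<and> (\<sigma> ^^ m) b = b"] that p_def by auto
  have never_a: "(\<sigma> ^^ s) b \<noteq> a" for s using r unfolding reach_def by blast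
  have "(\<sigma>' ^^ s) a = (\<sigma> ^^ s) b" if "1 \<le> s" "s \<le> p" for s
    using that
  proof (induction s)
    case (Suc s)
    show ?case
    proof (cases "s = 0")
      case False
      then have IH: "(\<sigma>' ^^ s) a = (\<sigma> ^^ s) b" and "(\<sigma> ^^ s) b \<noteq> b"
        using Suc before_b[of s] by auto
      have "(\<sigma>' ^^ Suc s) a = \<sigma>' ((\<sigma> ^^ s) b)" using IH by simp
      also have "\<dots> = \<sigma> ((\<sigma> ^^ s) b)"
        using never_a[of s] \<open>(\<sigma> ^^ s) b \<noteq> b\<close> by (simp add: \<sigma>'_def)
      finally show ?thesis by simp
    qed (simp add: \<sigma>'_def)
  qed simp
  then have "(\<sigma>' ^^ p) a = b" using p by simp
  then show ?thesis unfolding reach_def \<sigma>'_def by blast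
qed

lemma ncycles_merge_ge:
  assumes P: "\<sigma> permutes {1..n}" and a: "a \<in> {1..n}" and b: "b \<in> {1..n}"
    and r: "\<not> reach \<sigma> b a"
  shows "ncycles n \<sigma> \<le> ncycles n (\<sigma> \<circ> transpose a b) + 1"
proof -
  define \<sigma>' where "\<sigma>' = \<sigma> \<circ> transpose a b"
  define Q where "Q = {cyc n \<sigma> a, cyc n \<sigma> b}"
  have "cyc n \<sigma> a \<noteq> cyc n \<sigma> b" using cyc_eq_iff[OF P a, of b] r by simp
  then have cardQ: "card Q = 2" unfolding Q_def by simp
  have Q: "Q \<subseteq> cycle_set n \<sigma>" using a b unfolding Q_def cycle_set_def by auto
  have "insert (cyc n \<sigma>' a) (cycle_set n \<sigma> - Q) \<subseteq> cycle_set n \<sigma>'"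
    using persistent_cycles[OF P a b] a unfolding Q_def \<sigma>'_def cycle_set_def by auto
  then have "card (insert (cyc n \<sigma>' a) (cycle_set n \<sigma> - Q)) \<le> ncycles n \<sigma>'"
    unfolding ncycles_card by (intro card_mono) auto
  moreover have "cyc n \<sigma>' a \<notin> cycle_set n \<sigma> - Q"
    using new_cycle_not_old[OF P a, of \<sigma>'] unfolding Q_def by blast
  moreover have "card (cycle_set n \<sigma> - Q) = ncycles n \<sigma> - 2"
    using card_Diff_subset[OF _ Q] cardQ ncycles_card by (metis finite_subset finite_cycle_set Q)
  moreover have "2 \<le> ncycles n \<sigma>"
    using card_mono[OF finite_cycle_set Q] cardQ ncycles_card by simp
  ultimately show ?thesis unfolding \<sigma>'_def by simp
qed

lemma transpose_twice: "\<sigma> \<circ> transpose a b \<circ> transpose a b = \<sigma>"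
  by (simp add: comp_assoc)

(* Each direction is obtained from the other one applied to sigma o (a b). *)
lemma ncycles_merge:
  assumes P: "\<sigma> permutes {1..n}" and a: "a \<in> {1..n}" and b: "b \<in> {1..n}"
    and r: "\<not> reach \<sigma> b a"
  shows "ncycles n (\<sigma> \<circ> transpose a b) + 1 = ncycles n \<sigma>"
proof -
  define \<sigma>' where "\<sigma>' = \<sigma> \<circ> transpose a b"
  have ab: "a \<noteq> b" using r by auto
  have P': "\<sigma>' permutes {1..n}" unfolding \<sigma>'_def using transpose_perm[OF P a b] .
  have "reach \<sigma>' a b" using merge_connects[OF P _ ab r] \<sigma>'_def by simp
  then have "reach \<sigma>' b a" using reach_sym[OF P'] by simp
  from ncycles_split_ge[OF P' a b ab this]
  have "ncycles n \<sigma>' + 1 \<le> ncycles n \<sigma>" unfolding \<sigma>'_def transpose_twice .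
  then show ?thesis using ncycles_merge_ge[OF P a b r] \<sigma>'_def by simp
qed

lemma ncycles_split:
  assumes P: "\<sigma> permutes {1..n}" and a: "a \<in> {1..n}" and b: "b \<in> {1..n}"
    and ab: "a \<noteq> b" and r: "reach \<sigma> b a"
  shows "ncycles n (\<sigma> \<circ> transpose a b) = ncycles n \<sigma> + 1"
proof -
  define \<sigma>' where "\<sigma>' = \<sigma> \<circ> transpose a b"
  have P': "\<sigma>' permutes {1..n}" unfolding \<sigma>'_def using transpose_perm[OF P a b] .
  have "\<not> reach \<sigma>' b a" using split_separates[OF ab r] reach_sym[OF P'] \<sigma>'_def by auto
  from ncycles_merge_ge[OF P' a b this]
  have "ncycles n \<sigma>' \<le> ncycles n \<sigma> + 1" unfolding \<sigma>'_def transpose_twice .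
  then show ?thesis using ncycles_split_ge[OF P a b ab r] \<sigma>'_def by simp
qed

lemma plen_merge:
  assumes "\<sigma> permutes {1..n}" "a \<in> {1..n}" "b \<in> {1..n}" "\<not> reach \<sigma> b a"
  shows "plen n (\<sigma> \<circ> transpose a b) = plen n \<sigma> + 1"
  using ncycles_merge[OF assms] ncycles_le[of n \<sigma>] unfolding plen_def by linarith

lemma plen_split:
  assumes "\<sigma> permutes {1..n}" "a \<in> {1..n}" "b \<in> {1..n}" "a \<noteq> b" "reach \<sigma> b a"
  shows "plen n (\<sigma> \<circ> transpose a b) + 1 = plen n \<sigma>"
  using ncycles_split[OF assms] ncycles_le[of n "\<sigma> \<circ> transpose a b"] unfolding plen_def by linarith

lemma plen_transpose_le:
  assumes "\<sigma> permutes {1..n}" "a \<in> {1..n}" "b \<in> {1..n}" "a \<noteq> b"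
  shows "plen n (\<sigma> \<circ> transpose a b) \<le> plen n \<sigma> + 1"
  using plen_merge[OF assms(1-3)] plen_split[OF assms] by (cases "reach \<sigma> b a") auto

lemma transpose_left_to_right:
  assumes "\<sigma> permutes S"
  shows "transpose a b \<circ> \<sigma> = \<sigma> \<circ> transpose (inv \<sigma> a) (inv \<sigma> b)"
  using transpose_comp_eq[of \<sigma> a b] permutes_bij[OF assms] by simp

lemma reach_inv_iff:
  assumes P: "\<sigma> permutes S"
  shows "reach \<sigma> (inv \<sigma> b) (inv \<sigma> a) \<longleftrightarrow> reach \<sigma> b a"
proof -
  have comm: "(\<sigma> ^^ m) (inv \<sigma> x) = inv \<sigma> ((\<sigma> ^^ m) x)" for m x
  proof (induction m)
    case (Suc m)
    then show ?case using permutes_inverses[OF P] by simp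
  qed simp
  have "inj (inv \<sigma>)" using permutes_inj[OF permutes_inv[OF P]] .
  then have "(\<sigma> ^^ m) (inv \<sigma> b) = inv \<sigma> a \<longleftrightarrow> (\<sigma> ^^ m) b = a" for m
    by (simp add: comm inj_eq)
  then show ?thesis unfolding reach_def by simp
qed

lemma plen_merge_left:
  assumes P: "\<sigma> permutes {1..n}" and a: "a \<in> {1..n}" and b: "b \<in> {1..n}"
    and r: "\<not> reach \<sigma> b a"
  shows "plen n (transpose a b \<circ> \<sigma>) = plen n \<sigma> + 1"
proof -
  have "inv \<sigma> a \<in> {1..n}" "inv \<sigma> b \<in> {1..n}"
    using a b permutes_in_image[OF permutes_inv[OF P]] by auto
  moreover have "\<not> reach \<sigma> (inv \<sigma> b) (inv \<sigma> a)" using reach_inv_iff[OF P] r by simp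
  ultimately show ?thesis using plen_merge[OF P] transpose_left_to_right[OF P] by simp
qed

lemma plen_id [simp]: "plen n id = 0"
proof -
  have "cyc n id x = {x}" if "x \<in> {1..n}" for x
    using that unfolding cyc_reach reach_def by auto
  then have "cyc n id ` {1..n} = (\<lambda>x. {x}) ` {1..n}" by auto
  moreover have "card ((\<lambda>x. {x}) ` {1..n}) = n" by (subst card_image) (auto simp: inj_on_def)
  ultimately show ?thesis unfolding plen_def ncycles_def by simp
qed

(* Triangle inequality |sigma pi| <= |sigma| + |pi|, by induction on |pi|:
   pi is (pi o (pi x x)) o (pi x x), where the first factor is one shorter. *)
lemma plen_triangle:
  assumes "\<sigma> permutes {1..n}" "\<pi> permutes {1..n}"
  shows "plen n (\<sigma> \<circ> \<pi>) \<le> plen n \<sigma> + plen n \<pi>"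
  using assms
proof (induction "plen n \<pi>" arbitrary: \<pi> rule: less_induct)
  case less
  show ?case
  proof (cases "\<pi> = id")
    case False
    then obtain x where x: "\<pi> x \<noteq> x" by (auto simp: fun_eq_iff)
    then have xS: "x \<in> {1..n}" and pxS: "\<pi> x \<in> {1..n}"
      using permutes_not_in[OF less.prems(2)] permutes_in_image[OF less.prems(2)] by auto
    define \<pi>' where "\<pi>' = \<pi> \<circ> transpose (\<pi> x) x"
    have shorter: "plen n \<pi>' + 1 = plen n \<pi>"
      unfolding \<pi>'_def using plen_split[OF less.prems(2) pxS xS x] reach_step[of \<pi> x x] by simp
    have P': "\<pi>' permutes {1..n}" unfolding \<pi>'_def using transpose_perm[OF less.prems(2) pxS xS] .
    have "\<sigma> \<circ> \<pi> = (\<sigma> \<circ> \<pi>') \<circ> transpose (\<pi> x) x"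
      unfolding \<pi>'_def by (simp add: comp_assoc)
    then have "plen n (\<sigma> \<circ> \<pi>) \<le> plen n (\<sigma> \<circ> \<pi>') + 1"
      using plen_transpose_le[OF permutes_compose[OF P' less.prems(1)] pxS xS x] by simp
    also have "plen n (\<sigma> \<circ> \<pi>') \<le> plen n \<sigma> + plen n \<pi>'"
      using less.hyps[of \<pi>'] shorter P' less.prems(1) by simp
    finally show ?thesis using shorter by simp
  qed simp
qed

lemma tprod_Nil [simp]: "tprod [] = id"
  by (simp add: tprod_def)

lemma tprod_Cons: "tprod (t # ts) = transpose (fst t) (snd t) \<circ> tprod ts"
  by (simp add: tprod_def)

lemma tprod_append: "tprod (xs @ ys) = tprod xs \<circ> tprod ys"
  by (induction xs) (simp_all add: tprod_Cons comp_assoc)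

lemma tprod_permutes: "\<forall>t \<in> set ts. is_transp n t \<Longrightarrow> tprod ts permutes {1..n}"
proof (induction ts)
  case (Cons t ts)
  then have "transpose (fst t) (snd t) permutes {1..n}"
    by (intro permutes_swap_id) (auto simp: is_transp_def)
  moreover have "tprod ts permutes {1..n}" using Cons by simp
  ultimately show ?case unfolding tprod_Cons by (rule permutes_compose[rotated])
qed (simp add: permutes_id)

lemma plen_tprod_le:
  assumes "\<forall>t \<in> set ts. is_transp n t"
  shows "plen n (tprod ts) \<le> length ts"
  using assms
proof (induction ts)
  case (Cons t ts)
  have t: "fst t \<in> {1..n}" "snd t \<in> {1..n}" "fst t \<noteq> snd t"
    using Cons.prems by (auto simp: is_transp_def)
  have "plen n (transpose (fst t) (snd t)) \<le> 1"
    using plen_transpose_le[OF permutes_id t] by simp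
  moreover have "plen n (tprod (t # ts)) \<le> plen n (transpose (fst t) (snd t)) + plen n (tprod ts)"
    unfolding tprod_Cons using t Cons.prems
    by (intro plen_triangle permutes_swap_id tprod_permutes) auto
  ultimately show ?case using Cons by simp
qed simp

(* An injective map sends a finite closed set onto itself, so its orbits never enter or
   leave the set. *)
lemma reach_preserves_closed_set:
  assumes G: "finite G" and inj: "inj f" and closed: "\<And>x. x \<in> G \<Longrightarrow> f x \<in> G"
    and r: "reach f a b"
  shows "a \<in> G \<longleftrightarrow> b \<in> G"
proof -
  have "f ` G = G"
    using closed by (intro endo_inj_surj[OF G] inj_on_subset[OF inj]) auto
  then have step: "f x \<in> G \<longleftrightarrow> x \<in> G" for x
    using inj by (metis imageE imageI injD)
  have "(f ^^ m) a \<in> G \<longleftrightarrow> a \<in> G" for m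
    by (induction m) (simp_all add: step)
  then show ?thesis using r unfolding reach_def by blast
qed

lemma longcyc_permutes: "longcyc n permutes {1..n}"
proof (rule bij_imp_permutes)
  have inj: "inj_on (longcyc n) {1..n}"
    by (auto simp: inj_on_def longcyc_def split: if_splits)
  moreover have "longcyc n ` {1..n} = {1..n}"
    by (rule endo_inj_surj) (use inj in \<open>auto simp: longcyc_def\<close>)
  ultimately show "bij_betw (longcyc n) {1..n} {1..n}" by (simp add: bij_betw_def)
qed (auto simp: longcyc_def)

lemma kreweras_permutes: "\<sigma> permutes {1..n} \<Longrightarrow> inv \<sigma> \<circ> longcyc n permutes {1..n}"
  by (intro permutes_compose longcyc_permutes permutes_inv)

(* Geometry of the long cycle c = (1 2 ... n): arc n u w is the set of points strictly
   between u and w when going around the circle 1 -> 2 -> ... -> n -> 1 from u to w. *)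
definition arc :: "nat \<Rightarrow> nat \<Rightarrow> nat \<Rightarrow> nat set" where
  "arc n u w = {z \<in> {1..n}. if u < w then u < z \<and> z < w else u < z \<or> z < w}"

(* Non-crossing condition at a point u moved by sigma: the arc from u to sigma u is
   sigma-invariant, i.e. no cycle of sigma crosses the chord from u to sigma u. *)
definition arc_closed :: "nat \<Rightarrow> (nat \<Rightarrow> nat) \<Rightarrow> nat \<Rightarrow> bool" where
  "arc_closed n \<sigma> u \<longleftrightarrow> (\<forall>z \<in> arc n u (\<sigma> u). \<sigma> z \<in> arc n u (\<sigma> u))"

definition noncrossing :: "nat \<Rightarrow> (nat \<Rightarrow> nat) \<Rightarrow> bool" where
  "noncrossing n \<sigma> \<longleftrightarrow> (\<forall>u \<in> {1..n}. \<sigma> u \<noteq> u \<longrightarrow> arc_closed n \<sigma> u)"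

lemma arc_closed_orbit:
  assumes "arc_closed n \<sigma> u" "z \<in> arc n u (\<sigma> u)"
  shows "(\<sigma> ^^ m) z \<in> arc n u (\<sigma> u)"
  using assms(2) by (induction m) (use assms(1) in \<open>auto simp: arc_closed_def\<close>)

lemma longcyc_arc_step:
  assumes "x \<in> insert u (arc n u w)" "u \<in> {1..n}" "w \<in> {1..n}" "u \<noteq> w" "longcyc n x \<noteq> w"
  shows "longcyc n x \<in> arc n u w"
  using assms by (auto simp: arc_def longcyc_def split: if_splits)

(* If the arc from u to sigma u is closed, then [u, sigma u) is closed under the Kreweras
   complement: on it, c moves forward and sigma^-1 brings us back onto the arc. *)
lemma kreweras_arc_closed:
  assumes P: "\<sigma> permutes {1..n}" and u: "u \<in> {1..n}" and nf: "\<sigma> u \<noteq> u"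
    and closed: "arc_closed n \<sigma> u" and x: "x \<in> insert u (arc n u (\<sigma> u))"
  shows "(inv \<sigma> \<circ> longcyc n) x \<in> insert u (arc n u (\<sigma> u))"
proof (cases "longcyc n x = \<sigma> u")
  case True
  then show ?thesis using permutes_inverses(2)[OF P] by simp
next
  case False
  define I where "I = arc n u (\<sigma> u)"
  have "\<sigma> u \<in> {1..n}" using permutes_in_image[OF P] u by simp
  then have cx: "longcyc n x \<in> I"
    using longcyc_arc_step[OF x u _ _ False] nf unfolding I_def by auto
  have "\<sigma> ` I = I"
  proof (rule endo_inj_surj)
    show "finite I" by (simp add: I_def arc_def)
    show "\<sigma> ` I \<subseteq> I" using closed unfolding arc_closed_def I_def by auto
    show "inj_on \<sigma> I" by (rule inj_on_subset[OF permutes_inj[OF P] subset_UNIV])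
  qed
  then obtain z where z: "z \<in> I" "\<sigma> z = longcyc n x" using cx by (metis imageE)
  then have "(inv \<sigma> \<circ> longcyc n) x = z" using permutes_inverses(2)[OF P] by (metis comp_apply)
  then show ?thesis using z(1) unfolding I_def by simp
qed

lemma kreweras_same_side:
  assumes P: "\<sigma> permutes {1..n}" and u: "u \<in> {1..n}" and nf: "\<sigma> u \<noteq> u"
    and closed: "arc_closed n \<sigma> u" and r: "reach (inv \<sigma> \<circ> longcyc n) a b"
  shows "a \<in> insert u (arc n u (\<sigma> u)) \<longleftrightarrow> b \<in> insert u (arc n u (\<sigma> u))"
  using kreweras_arc_closed[OF P u nf closed]
  by (intro reach_preserves_closed_set[OF _ permutes_inj[OF kreweras_permutes[OF P]] _ r])
    (auto simp: arc_def)

lemma arc_endpoints [simp]: "u \<notin> arc n u w" "w \<notin> arc n u w"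
  by (auto simp: arc_def)

lemma arc_no_crossing:
  assumes "u \<in> {1..n}" "w \<in> {1..n}" "z \<in> arc n u w" "v \<in> {1..n}" "v \<noteq> z" "v \<noteq> w"
    and "u \<in> insert z (arc n z v) \<longleftrightarrow> w \<in> insert z (arc n z v)"
  shows "v \<in> arc n u w"
  using assms unfolding arc_def by (auto split: if_splits)

lemma arc_split:
  assumes "b \<in> arc n a w"
  shows "arc n b w = arc n a w \<inter> arc n b a"
  using assms unfolding arc_def by (auto split: if_splits)

context
  fixes n :: nat and \<sigma> :: "nat \<Rightarrow> nat" and a b :: nat
  assumes P: "\<sigma> permutes {1..n}" and a: "a \<in> {1..n}" and b: "b \<in> {1..n}" and ab: "a < b"
    and fixed_b: "\<sigma> b = b" and nc: "noncrossing n \<sigma>"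
    and same: "reach (inv \<sigma> \<circ> longcyc n) a b"
begin

private lemma same_side:
  assumes "u \<in> {1..n}" "\<sigma> u \<noteq> u"
  shows "a \<in> insert u (arc n u (\<sigma> u)) \<longleftrightarrow> b \<in> insert u (arc n u (\<sigma> u))"
  using kreweras_same_side[OF P assms _ same] nc assms unfolding noncrossing_def by blast

private lemma closed_at:
  "u \<in> {1..n} \<Longrightarrow> \<sigma> u \<noteq> u \<Longrightarrow> arc_closed n \<sigma> u"
  using nc unfolding noncrossing_def by blast

private lemma in_range: "x \<in> {1..n} \<Longrightarrow> \<sigma> x \<in> {1..n}"
  using permutes_in_image[OF P] by simp

private lemma not_to_b: "x \<noteq> b \<Longrightarrow> \<sigma> x \<noteq> b"
  using fixed_b permutes_inj[OF P] by (metis injD)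

private lemma no_crossing_at:
  assumes "u \<in> {1..n}" "w \<in> {1..n}" "z \<in> arc n u w" "\<sigma> z \<noteq> z" "\<sigma> z \<noteq> w"
    and "{u, w} = {a, b}"
  shows "\<sigma> z \<in> arc n u w"
proof -
  have z: "z \<in> {1..n}" "z \<noteq> u" "z \<noteq> w" using assms(3) arc_endpoints by (auto simp: arc_def)
  have "u = a \<and> w = b \<or> u = b \<and> w = a" using assms(6) by (auto simp: doubleton_eq_iff)
  then have "u \<in> insert z (arc n z (\<sigma> z)) \<longleftrightarrow> w \<in> insert z (arc n z (\<sigma> z))"
    using same_side[OF z(1) assms(4)] by auto
  then show ?thesis using arc_no_crossing[OF assms(1-3) in_range[OF z(1)] assms(4,5)] by simp
qed

lemma arc_closed_insert_a: "arc_closed n (\<sigma> \<circ> transpose a b) a"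
  unfolding arc_closed_def
proof
  fix z assume "z \<in> arc n a ((\<sigma> \<circ> transpose a b) a)"
  then have z: "z \<in> arc n a b" by (simp add: fixed_b)
  then have "z \<noteq> a" "z \<noteq> b" using arc_endpoints by blast+
  then have "(\<sigma> \<circ> transpose a b) z = \<sigma> z" by simp
  moreover have "\<sigma> z \<in> arc n a b"
    using no_crossing_at[OF a b z] not_to_b \<open>z \<noteq> b\<close> z by (cases "\<sigma> z = z") auto
  ultimately show "(\<sigma> \<circ> transpose a b) z \<in> arc n a ((\<sigma> \<circ> transpose a b) a)"
    by (simp add: fixed_b)
qed

lemma arc_closed_insert_b: "arc_closed n (\<sigma> \<circ> transpose a b) b"
  unfolding arc_closed_def
proof
  fix z assume "z \<in> arc n b ((\<sigma> \<circ> transpose a b) b)"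
  then have z: "z \<in> arc n b (\<sigma> a)" by simp
  have split: "arc n b (\<sigma> a) = arc n a (\<sigma> a) \<inter> arc n b a" if "\<sigma> a \<noteq> a"
    using same_side[OF a that] ab by (intro arc_split) simp
  have "z \<in> arc n b a" using z split by (cases "\<sigma> a = a") auto
  then have "z \<noteq> a" "z \<noteq> b" using arc_endpoints by blast+
  moreover have "\<sigma> z \<in> arc n b (\<sigma> a)" if nf: "\<sigma> z \<noteq> z"
  proof (cases "\<sigma> a = a")
    case True
    have "\<sigma> z \<noteq> a" using True nf permutes_inj[OF P] by (metis injD)
    then show ?thesis using no_crossing_at[OF b a] z nf True by auto
  next
    case False
    have "\<sigma> z \<in> arc n a (\<sigma> a)"
      using closed_at[OF a False] z split[OF False] unfolding arc_closed_def by blast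
    moreover from this have "\<sigma> z \<noteq> a" using arc_endpoints by metis
    then have "\<sigma> z \<in> arc n b a" using no_crossing_at[OF b a] \<open>z \<in> arc n b a\<close> nf by auto
    ultimately show ?thesis using split[OF False] by blast
  qed
  ultimately show "(\<sigma> \<circ> transpose a b) z \<in> arc n b ((\<sigma> \<circ> transpose a b) b)"
    using z by (cases "\<sigma> z = z") auto
qed

lemma arc_closed_insert_other:
  assumes u: "u \<in> {1..n}" "u \<noteq> a" "u \<noteq> b" and nf: "\<sigma> u \<noteq> u"
  shows "arc_closed n (\<sigma> \<circ> transpose a b) u"
  unfolding arc_closed_def
proof
  define X where "X = arc n u (\<sigma> u)"
  have sides: "a \<in> X \<longleftrightarrow> b \<in> X" using same_side[OF u(1) nf] u(2,3) unfolding X_def by simp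
  have closed: "\<sigma> z \<in> X" if "z \<in> X" for z
    using closed_at[OF u(1) nf] that unfolding arc_closed_def X_def by blast
  fix z assume "z \<in> arc n u ((\<sigma> \<circ> transpose a b) u)"
  then have "z \<in> X" using u unfolding X_def by simp
  consider "z = a" | "z = b" | "z \<noteq> a" "z \<noteq> b" by blast
  then have "(\<sigma> \<circ> transpose a b) z \<in> X"
  proof cases
    case 1
    then show ?thesis using \<open>z \<in> X\<close> sides fixed_b by simp
  next
    case 2
    then show ?thesis using \<open>z \<in> X\<close> sides closed by simp
  next
    case 3
    then show ?thesis using \<open>z \<in> X\<close> closed by simp
  qed
  then show "(\<sigma> \<circ> transpose a b) z \<in> arc n u ((\<sigma> \<circ> transpose a b) u)"
    using u unfolding X_def by simp
qed

lemma noncrossing_insert: "noncrossing n (\<sigma> \<circ> transpose a b)"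
  unfolding noncrossing_def
proof (intro ballI impI)
  fix u assume u: "u \<in> {1..n}" and nf: "(\<sigma> \<circ> transpose a b) u \<noteq> u"
  consider "u = a" | "u = b" | "u \<noteq> a" "u \<noteq> b" by blast
  then show "arc_closed n (\<sigma> \<circ> transpose a b) u"
    using arc_closed_insert_a arc_closed_insert_b arc_closed_insert_other[OF u] nf by cases auto
qed

end

(* Every non-trivial cycle of sigma contains a point <= t. Along a sorted factorization
   this holds with t the first entry of the last transposition. *)
definition cycles_below :: "nat \<Rightarrow> (nat \<Rightarrow> nat) \<Rightarrow> nat \<Rightarrow> bool" where
  "cycles_below n \<sigma> t \<longleftrightarrow> (\<forall>x \<in> {1..n}. \<sigma> x \<noteq> x \<longrightarrow> (\<exists>y. reach \<sigma> x y \<and> y \<le> t))"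

lemma reach_insert_fixed:
  assumes fixed_b: "\<sigma> b = b" and r: "reach \<sigma> x y"
  shows "reach (\<sigma> \<circ> transpose a b) x y"
proof -
  define \<sigma>' where "\<sigma>' = \<sigma> \<circ> transpose a b"
  have step: "reach \<sigma>' z (\<sigma> z)" for z
  proof -
    consider "z = a" | "z = b" | "z \<noteq> a" "z \<noteq> b" by blast
    then show ?thesis
    proof cases
      case 1
      then have "\<sigma>' (\<sigma>' z) = \<sigma> z" using fixed_b by (cases "a = b") (auto simp: \<sigma>'_def)
      then show ?thesis using reach_step[OF reach_step[OF reach_refl], of \<sigma>' z] by simp
    next
      case 2
      then show ?thesis using fixed_b by simp
    next
      case 3
      then have "\<sigma>' z = \<sigma> z" by (simp add: \<sigma>'_def)
      then show ?thesis using reach_step[OF reach_refl, of \<sigma>' z] by simp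
    qed
  qed
  have "reach \<sigma>' x ((\<sigma> ^^ m) x)" for m
    by (induction m) (auto intro: reach_trans step)
  then show ?thesis using r unfolding reach_def \<sigma>'_def by auto
qed

lemma cycles_below_insert:
  assumes P: "\<sigma> permutes {1..n}" and fixed_b: "\<sigma> b = b"
    and below: "cycles_below n \<sigma> t" and ta: "t \<le> a"
  shows "cycles_below n (\<sigma> \<circ> transpose a b) a"
  unfolding cycles_below_def
proof (intro ballI impI)
  fix x assume x: "x \<in> {1..n}" and nf: "(\<sigma> \<circ> transpose a b) x \<noteq> x"
  define \<sigma>' where "\<sigma>' = \<sigma> \<circ> transpose a b"
  consider "x = a" | "x = b" | "x \<noteq> a" "x \<noteq> b" by blast
  then show "\<exists>y. reach (\<sigma> \<circ> transpose a b) x y \<and> y \<le> a"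
  proof cases
    case 1
    then show ?thesis by (intro exI[of _ a]) simp
  next
    case 2
    (* After the insertion, b is followed by the \<sigma>-cycle of a. *)
    have "reach \<sigma> (\<sigma> a) a" using reach_sym[OF P _ reach_step[OF reach_refl]] by simp
    then have "reach \<sigma>' (\<sigma>' b) a"
      using reach_insert_fixed[where \<sigma>=\<sigma> and b=b, OF fixed_b] by (simp add: \<sigma>'_def)
    then have "reach \<sigma>' b a" by (rule reach_trans[OF reach_step[OF reach_refl]])
    then show ?thesis using 2 \<sigma>'_def by auto
  next
    case 3
    then have "\<sigma> x \<noteq> x" using nf by simp
    then obtain y where "reach \<sigma> x y" "y \<le> t" using below x unfolding cycles_below_def by blast
    then show ?thesis using reach_insert_fixed[where \<sigma>=\<sigma> and b=b, OF fixed_b] ta by fastforce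
  qed
qed

(* Otherwise the cycle of b has a largest element u below a, and the chord (u, sigma u)
   separates a from b, contradicting kreweras_same_side. *)
lemma insertion_point_fixed:
  assumes P: "\<sigma> permutes {1..n}" and a: "a \<in> {1..n}" and b: "b \<in> {1..n}" and ab: "a < b"
    and nc: "noncrossing n \<sigma>" and below: "cycles_below n \<sigma> t" and ta: "t \<le> a"
    and apart: "\<not> reach \<sigma> b a" and same: "reach (inv \<sigma> \<circ> longcyc n) a b"
  shows "\<sigma> b = b"
proof (rule ccontr)
  assume nb: "\<sigma> b \<noteq> b"
  define B where "B = {z \<in> {1..n}. reach \<sigma> b z \<and> z < a}"
  obtain y where y: "reach \<sigma> b y" "y \<le> t" using below b nb unfolding cycles_below_def by blast
  have "y \<in> B"
    using reach_in[OF P b y(1)] y apart ta unfolding B_def by (cases "y = a") auto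
  then have "B \<noteq> {}" "finite B" unfolding B_def by auto
  define u where "u = Max B"
  have "u \<in> B" using Max_in[OF \<open>finite B\<close> \<open>B \<noteq> {}\<close>] u_def by simp
  then have u: "u \<in> {1..n}" and bu: "reach \<sigma> b u" and ua: "u < a" unfolding B_def by auto
  have umax: "z \<le> u" if "z \<in> B" for z using Max_ge[OF \<open>finite B\<close> that] u_def by simp
  have nf: "\<sigma> u \<noteq> u"
  proof
    assume "\<sigma> u = u"
    moreover obtain m where "(\<sigma> ^^ m) u = b" using reach_sym[OF P _ bu] unfolding reach_def by auto
    ultimately show False using funpow_fixpoint[of \<sigma> u m] ua ab by simp
  qed
  define w where "w = \<sigma> u"
  have bw: "reach \<sigma> b w" using reach_step[OF bu] w_def by simp
  have w: "w \<in> {1..n}" using permutes_in_image[OF P] u w_def by simp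
  have "w \<noteq> a" using bw apart by blast
  have "a \<in> arc n u w"
  proof (cases "a < w")
    case False
    then have "w \<in> B" using w bw \<open>w \<noteq> a\<close> unfolding B_def by simp
    then have "w < u" using umax nf w_def by fastforce
    then show ?thesis using ua a unfolding arc_def by auto
  qed (use ua a in \<open>auto simp: arc_def\<close>)
  have closed: "arc_closed n \<sigma> u" using nc u nf unfolding noncrossing_def by blast
  have "b \<in> arc n u w"
    using kreweras_same_side[OF P u nf closed same] \<open>a \<in> arc n u w\<close> ua ab w_def by auto
  (* But the arc is closed under \<sigma>, so it would contain its own endpoint u. *)
  moreover obtain m where "(\<sigma> ^^ m) b = u" using bu unfolding reach_def by blast
  ultimately have "u \<in> arc n u w" using arc_closed_orbit[OF closed, of b m] w_def by simp
  then show False by simp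
qed

lemma gam_Suc:
  assumes "l < length ts"
  shows "gam ts (Suc l) = gam ts l \<circ> transpose (fst (ts ! l)) (snd (ts ! l))"
  unfolding gam_def take_Suc_conv_app_nth[OF assms] tprod_append by (simp add: tprod_def)

lemma tprod_gam_drop: "tprod ts = gam ts l \<circ> tprod (drop l ts)"
  unfolding gam_def by (metis append_take_drop_id tprod_append)

locale sorted_geodesic =
  fixes n k :: nat and \<gamma> :: "(nat \<times> nat) list"
  assumes mem: "\<gamma> \<in> Sigma_star n k"
begin

abbreviation I :: "nat \<Rightarrow> nat" where "I l \<equiv> fst (\<gamma> ! (l - 1))"
abbreviation J :: "nat \<Rightarrow> nat" where "J l \<equiv> snd (\<gamma> ! (l - 1))"
abbreviation g :: "nat \<Rightarrow> nat \<Rightarrow> nat" where "g l \<equiv> gam \<gamma> l"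
abbreviation kr :: "nat \<Rightarrow> nat \<Rightarrow> nat" where "kr l \<equiv> inv (g l) \<circ> longcyc n"

lemma length_\<gamma>: "length \<gamma> = k" and transps: "\<forall>t \<in> set \<gamma>. is_transp n t"
  and plen_prod: "plen n (tprod \<gamma>) = k" and below_long: "ple n (tprod \<gamma>) (longcyc n)"
  and sorted_I: "sorted (map fst \<gamma>)"
  using mem unfolding Sigma_star_def Sigma_n_def by auto

lemma factor:
  assumes "l \<in> {1..k}"
  shows "I l \<in> {1..n}" "J l \<in> {1..n}" "I l < J l"
proof -
  have "\<gamma> ! (l - 1) \<in> set \<gamma>" using assms length_\<gamma> by (intro nth_mem) auto
  then show "I l \<in> {1..n}" "J l \<in> {1..n}" "I l < J l"
    using transps unfolding is_transp_def by auto
qed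

lemma I_mono:
  assumes "l \<in> {1..k}"
  shows "I (l - 1) \<le> I l"
proof (cases "l = 1")
  case False
  have le: "l - 2 \<le> l - 1" and lt: "l - 1 < length (map fst \<gamma>)" using assms length_\<gamma> by auto
  from sorted_nth_mono[OF sorted_I le lt] show ?thesis using lt False by (simp add: numeral_2_eq_2)
qed simp

lemma g_permutes: "g l permutes {1..n}"
  unfolding gam_def using transps by (intro tprod_permutes) (meson in_set_takeD)

lemma kr_permutes: "kr l permutes {1..n}"
  by (rule kreweras_permutes[OF g_permutes])

lemma g_step:
  assumes "l \<in> {1..k}"
  shows "g l = g (l - 1) \<circ> transpose (I l) (J l)"
proof -
  have "l - 1 < length \<gamma>" using assms length_\<gamma> by auto
  from gam_Suc[OF this] show ?thesis using assms by simp
qed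

lemma kr_step:
  assumes "l \<in> {1..k}"
  shows "kr l = transpose (I l) (J l) \<circ> kr (l - 1)"
  using g_step[OF assms] o_inv_distrib[OF permutes_bij[OF g_permutes] bij_transpose]
  by (simp add: comp_assoc)

lemma transps_drop: "\<forall>t \<in> set (drop l \<gamma>). is_transp n t"
  using transps by (auto dest: in_set_dropD)

lemma plen_g:
  assumes "l \<le> k"
  shows "plen n (g l) = l"
proof -
  have "plen n (g l) \<le> l"
    using plen_tprod_le[of "take l \<gamma>" n] transps assms length_\<gamma>
    unfolding gam_def by (auto dest: in_set_takeD)
  moreover have "plen n (tprod (drop l \<gamma>)) \<le> k - l"
    using plen_tprod_le[OF transps_drop] length_\<gamma> by simp
  moreover have "k \<le> plen n (g l) + plen n (tprod (drop l \<gamma>))"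
    using plen_triangle[OF g_permutes[of l] tprod_permutes[OF transps_drop[of l]]]
      tprod_gam_drop[of \<gamma> l] plen_prod by simp
  ultimately show ?thesis using assms by linarith
qed

lemma plen_kr:
  assumes "l \<le> k"
  shows "plen n (kr l) + l = plen n (longcyc n)"
proof -
  have long: "plen n (longcyc n) = k + plen n (kr k)"
    using below_long plen_prod length_\<gamma> unfolding ple_def gam_def by simp
  have drop: "tprod (drop l \<gamma>) permutes {1..n}" "plen n (tprod (drop l \<gamma>)) \<le> k - l"
    using tprod_permutes[OF transps_drop] plen_tprod_le[OF transps_drop] length_\<gamma> by auto
  have gk: "g k = g l \<circ> tprod (drop l \<gamma>)"
    using tprod_gam_drop[of \<gamma> l] length_\<gamma> by (simp add: gam_def)
  have "inv (g l) = inv (g l) \<circ> (g k \<circ> inv (g k))"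
    using permutes_inv_o(1)[OF g_permutes[of k]] by simp
  also have "\<dots> = (inv (g l) \<circ> g l) \<circ> tprod (drop l \<gamma>) \<circ> inv (g k)"
    unfolding gk by (simp add: comp_assoc)
  finally have "inv (g l) = tprod (drop l \<gamma>) \<circ> inv (g k)"
    using permutes_inv_o(2)[OF g_permutes[of l]] by simp
  then have "plen n (kr l) \<le> plen n (tprod (drop l \<gamma>)) + plen n (kr k)"
    using plen_triangle[OF drop(1) kr_permutes[of k]] by (simp add: comp_assoc)
  moreover have "g l \<circ> kr l = longcyc n"
    using permutes_inv_o(1)[OF g_permutes[of l]] by (simp add: comp_assoc[symmetric])
  then have "plen n (longcyc n) \<le> plen n (g l) + plen n (kr l)"
    using plen_triangle[OF g_permutes[of l] kr_permutes[of l]] by simp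
  ultimately show ?thesis using long drop(2) plen_g[OF assms] assms by linarith
qed

(* Hence each factor merges two cycles of gamma_(l-1) (else the length would drop) *)
lemma factor_merges:
  assumes l: "l \<in> {1..k}"
  shows "\<not> reach (g (l - 1)) (J l) (I l)"
proof
  assume "reach (g (l - 1)) (J l) (I l)"
  then have "plen n (g l) + 1 = plen n (g (l - 1))"
    using plen_split[OF g_permutes factor(1,2)[OF l]] factor(3)[OF l] g_step[OF l] by simp
  moreover have "plen n (g l) = l" by (rule plen_g) (use l in auto)
  moreover have "plen n (g (l - 1)) = l - 1" by (rule plen_g) (use l in auto)
  ultimately show False using l by simp
qed

(* and splits a cycle of the Kreweras complement (else its length would not drop). *)
lemma factor_within_kreweras_cycle:
  assumes l: "l \<in> {1..k}"
  shows "reach (kr (l - 1)) (I l) (J l)"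
proof (rule ccontr)
  assume "\<not> reach (kr (l - 1)) (I l) (J l)"
  then have "\<not> reach (kr (l - 1)) (J l) (I l)" using reach_sym[OF kr_permutes] by blast
  then have "plen n (kr l) = plen n (kr (l - 1)) + 1"
    using plen_merge_left[OF kr_permutes factor(1,2)[OF l]] kr_step[OF l] by simp
  moreover have "plen n (kr l) + l = plen n (longcyc n)" by (rule plen_kr) (use l in auto)
  moreover have "plen n (kr (l - 1)) + (l - 1) = plen n (longcyc n)"
    by (rule plen_kr) (use l in auto)
  ultimately show False using l by simp
qed

lemma invariants:
  "p \<le> k \<Longrightarrow> noncrossing n (g p) \<and> cycles_below n (g p) (I p)
     \<and> (\<forall>l \<in> {1..p}. g (l - 1) (J l) = J l)"
proof (induction p)
  case 0
  show ?case by (simp add: gam_def noncrossing_def cycles_below_def)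
next
  case (Suc p)
  then have l: "Suc p \<in> {1..k}" and IH: "noncrossing n (g p)" "cycles_below n (g p) (I p)"
      "\<forall>l \<in> {1..p}. g (l - 1) (J l) = J l" by auto
  have mono: "I p \<le> I (Suc p)" using I_mono[OF l] by simp
  have fixed: "g p (J (Suc p)) = J (Suc p)"
    using insertion_point_fixed[OF g_permutes factor[OF l] IH(1,2) mono]
      factor_merges[OF l] factor_within_kreweras_cycle[OF l] by simp
  have step: "g (Suc p) = g p \<circ> transpose (I (Suc p)) (J (Suc p))" using g_step[OF l] by simp
  have "noncrossing n (g (Suc p))"
    unfolding step using factor_within_kreweras_cycle[OF l]
    by (intro noncrossing_insert[OF g_permutes factor[OF l] fixed IH(1)]) simp
  moreover have "cycles_below n (g (Suc p)) (I (Suc p))"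
    unfolding step using cycles_below_insert[OF g_permutes fixed IH(2) mono] .
  moreover have "\<forall>l \<in> {1..Suc p}. g (l - 1) (J l) = J l"
    using IH(3) fixed by (auto simp: le_Suc_eq)
  ultimately show ?case by blast
qed

lemma J_fixed: "l \<in> {1..k} \<Longrightarrow> g (l - 1) (J l) = J l"
  using invariants[of l] by auto

lemma insertion_step:
  assumes l: "l \<in> {1..k}"
  shows "g l (I l) = J l" "g l (J l) = g (l - 1) (I l)"
    "\<And>x. x \<notin> {I l, J l} \<Longrightarrow> g l x = g (l - 1) x"
  using g_step[OF l] J_fixed[OF l] by simp_all

lemma support_g:
  "m \<le> k \<Longrightarrow> {x. g m x \<noteq> x} = (\<Union>l \<in> {1..m}. {I l, J l})"
proof (induction m)
  case (Suc m)
  then have l: "Suc m \<in> {1..k}" by simp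
  have "I (Suc m) \<noteq> J (Suc m)" using factor(3)[OF l] by simp
  moreover have "g m (I (Suc m)) \<noteq> J (Suc m)"
    using J_fixed[OF l] permutes_inj[OF g_permutes[of m]] \<open>I (Suc m) \<noteq> J (Suc m)\<close>
    by (metis diff_Suc_1 injD)
  ultimately have "g (Suc m) x \<noteq> x \<longleftrightarrow> g m x \<noteq> x \<or> x \<in> {I (Suc m), J (Suc m)}" for x
    using insertion_step[OF l] by (cases "x \<in> {I (Suc m), J (Suc m)}") auto
  then have "{x. g (Suc m) x \<noteq> x} = {x. g m x \<noteq> x} \<union> {I (Suc m), J (Suc m)}" by auto
  also have "\<dots> = (\<Union>l \<in> {1..Suc m}. {I l, J l})"
    using Suc by (simp add: atLeastAtMostSuc_conv Un_commute)
  finally show ?case .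
qed (simp add: gam_def)

(* Statement 1: J l is fixed by gamma_(l-1), while earlier J's are in its support. *)
lemma J_inj: "inj_on J {1..k}"
proof -
  have "J l \<noteq> J l'" if "l \<in> {1..k}" "l' \<in> {1..k}" "l' < l" for l l'
  proof -
    have "J l' \<in> {x. g (l - 1) x \<noteq> x}" using support_g[of "l - 1"] that by auto
    then show ?thesis using J_fixed[OF that(1)] by auto
  qed
  then show ?thesis by (intro inj_onI) (metis linorder_neqE_nat)
qed

end

theorem lemma3p4:
  fixes n k :: nat and \<gamma> :: "(nat \<times> nat) list"
  assumes "n \<ge> 1" and "k \<ge> 1" and "\<gamma> \<in> Sigma_star n k"
  defines "i \<equiv> \<lambda>l. fst (\<gamma> ! (l - 1))" and "j \<equiv> \<lambda>l. snd (\<gamma> ! (l - 1))"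
  shows "inj_on j {1..k}
    \<and> (\<forall>l \<in> {1..k}. gam \<gamma> (l - 1) (j l) = j l)
    \<and> (\<forall>l \<in> {1..k}. gam \<gamma> l (i l) = j l \<and> gam \<gamma> l (j l) = gam \<gamma> (l - 1) (i l)
            \<and> (\<forall>x. x \<notin> {i l, j l} \<longrightarrow> gam \<gamma> l x = gam \<gamma> (l - 1) x))
    \<and> (\<forall>m \<in> {1..k}. {x. gam \<gamma> m x \<noteq> x} = (\<Union>l \<in> {1..m}. {i l, j l}))"
proof -
  interpret sorted_geodesic n k \<gamma> using assms(3) by unfold_locales
  have "inj_on j {1..k}" unfolding j_def using J_inj by simp
  moreover have "\<forall>l \<in> {1..k}. gam \<gamma> (l - 1) (j l) = j l" unfolding j_def using J_fixed by simp
  moreover have "\<forall>l \<in> {1..k}. gam \<gamma> l (i l) = j l \<and> gam \<gamma> l (j l) = gam \<gamma> (l - 1) (i l)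
      \<and> (\<forall>x. x \<notin> {i l, j l} \<longrightarrow> gam \<gamma> l x = gam \<gamma> (l - 1) x)"
    unfolding i_def j_def using insertion_step by blast
  moreover have "\<forall>m \<in> {1..k}. {x. gam \<gamma> m x \<noteq> x} = (\<Union>l \<in> {1..m}. {i l, j l})"
    unfolding i_def j_def using support_g by simp
  ultimately show ?thesis by blast
qed

end
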